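(* Let $n,m,T\in\mathbb{N}$, $u_{[0,T]}\in\mathbb{R}^{m(T+1)}$, and let $(A,B)\in\mathbb{R}^{n\times n}\times\mathbb{R}^{n\times m}$ be controllable. If $u_{[0,T-1]}$ is persistently exciting of order $n$, then the matrix $\mathcal{H}_1(x_{[0,T]})=\begin{bmatrix}x(0)&\cdots&x(T)\end{bmatrix}$ has full row rank $n$ for every state sequence $x_{[0,T]}$ satisfying $x(t+1)=Ax(t)+Bu(t)$ for all $t\in[0,T-1]$.
   Context: For $v:\mathbb{Z}_+\to\mathbb{R}^q$, $v_{[0,T-1]}=\begin{bmatrix}v(0)^\top & \cdots & v(T-1)^\top\end{bmatrix}^\top$. For $k\in[1,T]$ the Hankel matrix of depth $k$ is the $qk\times(T-k+1)$ block matrix $\mathcal{H}_k(v_{[0,T-1]})$ whose $(i,j)$ block ($i\in[0,k-1]$, $j\in[0,T-k]$) is $v(i+j)$. The sequence $v_{[0,T-1]}$ is persistently exciting of order $k$ if $k\le T$ and $\mathcal{H}_k(v_{[0,T-1]})$ has full row rank. *)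

theory Defs
  imports "Jordan_Normal_Form.DL_Rank"
begin

definition mrank :: "real mat \<Rightarrow> nat" where
  "mrank M = vec_space.rank (dim_row M) M"

definition full_row_rank :: "real mat \<Rightarrow> bool" where
  "full_row_rank M \<longleftrightarrow> mrank M = dim_row M"

text \<open>Hankel matrix of depth k of v(0),...,v(T-1), where each v(t) has dimension q:
  a (q*k) x (T-k+1) matrix whose (i,j) block (of size q x 1) is v(i+j).\<close>
definition hankel :: "nat \<Rightarrow> nat \<Rightarrow> nat \<Rightarrow> (nat \<Rightarrow> real vec) \<Rightarrow> real mat" where
  "hankel q k T v = mat (q * k) (T - k + 1) (\<lambda>(r, c). v (r div q + c) $ (r mod q))"

definition persistently_exciting :: "nat \<Rightarrow> nat \<Rightarrow> (nat \<Rightarrow> real vec) \<Rightarrow> nat \<Rightarrow> bool" where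
  "persistently_exciting q T v k \<longleftrightarrow> k \<le> T \<and> full_row_rank (hankel q k T v)"

text \<open>Kalman controllability matrix [B, AB, ..., A^(n-1) B] and controllability.\<close>
definition ctrb_matrix :: "real mat \<Rightarrow> real mat \<Rightarrow> real mat" where
  "ctrb_matrix A B = mat (dim_row A) (dim_row A * dim_col B)
     (\<lambda>(r, c). ((A ^\<^sub>m (c div dim_col B)) * B) $$ (r, c mod dim_col B))"

definition controllable :: "real mat \<Rightarrow> real mat \<Rightarrow> bool" where
  "controllable A B \<longleftrightarrow> mrank (ctrb_matrix A B) = dim_row A"

end

theory Submission
  imports Defs
begin

text \<open>Let \<open>\<xi>\<close> be orthogonal to every state \<open>x(0), ..., x(T)\<close>. The \<open>n + 1\<close> covectors
  \<open>\<xi>\<^sup>T A\<^sup>k\<close> (\<open>k \<le> n\<close>) are linearly dependent, so some monic \<open>g\<close> of degree \<open>n\<close> has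
  \<open>\<xi>\<^sup>T g(A) = 0\<close>. Combining the identities \<open>\<xi>\<^sup>T x(t + k) = 0\<close> with the coefficients of \<open>g\<close> and
  expanding \<open>x(t + k)\<close> by variation of constants, the free responses cancel and a linear relation
  among the entries of the input window \<open>u(t), ..., u(t + n - 1)\<close> remains, the same for every \<open>t\<close>.
  Persistency of excitation of order \<open>n\<close> forces its coefficients \<open>g\<^sub>j\<^sub>+\<^sub>1 \<xi>\<^sup>T B + ... + g\<^sub>n \<xi>\<^sup>T A\<^sup>n\<^sup>-\<^sup>j\<^sup>-\<^sup>1 B\<close>
  to vanish. This system is triangular with unit diagonal in the Markov parameters \<open>\<xi>\<^sup>T A\<^sup>i B\<close>,
  so these vanish for \<open>i < n\<close>, and controllability gives \<open>\<xi> = 0\<close>.\<close>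

lemma sum_lessThan_mult_div_mod:
  fixes n :: nat
  shows "(\<Sum>r<m * n. f (r div m) (r mod m)) = (\<Sum>j<n. \<Sum>l<m. f j l)"
proof (induction n)
  case (Suc n)
  have "(\<Sum>r<m * Suc n. f (r div m) (r mod m))
      = (\<Sum>r<m * n. f (r div m) (r mod m)) + (\<Sum>r\<in>{m * n..<m * n + m}. f (r div m) (r mod m))"
    using sum.atLeastLessThan_concat[of 0 "m * n" "m * n + m" "\<lambda>r. f (r div m) (r mod m)"]
    by (simp add: atLeast0LessThan add.commute)
  moreover have "(\<Sum>r\<in>{m * n..<m * n + m}. f (r div m) (r mod m))
      = (\<Sum>l<m. f ((l + m * n) div m) ((l + m * n) mod m))"
    using sum.shift_bounds_nat_ivl[where g = "\<lambda>r. f (r div m) (r mod m)" and m = 0 and k = "m * n" and n = m]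
    by (simp add: atLeast0LessThan add.commute)
  moreover have "\<dots> = (\<Sum>l<m. f n l)" by (intro sum.cong) auto
  ultimately show ?case using Suc by simp
qed simp

lemma triangular_convolution_eq_0:
  fixes g h :: "nat \<Rightarrow> 'a :: comm_ring_1"
  assumes monic: "g n = 1"
    and conv: "\<And>j. j < n \<Longrightarrow> (\<Sum>k\<in>{Suc j..n}. g k * h (k - Suc j)) = 0"
  shows "i < n \<Longrightarrow> h i = 0"
proof (induction i rule: less_induct)
  case (less i)
  define j where "j = n - Suc i"
  have "0 = (\<Sum>k\<in>{Suc j..<Suc n}. g k * h (k - Suc j))"
    using conv[of j] less.prems by (simp add: j_def atLeastLessThanSuc_atLeastAtMost)
  also have "\<dots> = (\<Sum>k\<in>{Suc j..<n}. g k * h (k - Suc j)) + g n * h i"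
    using less.prems by (simp add: j_def Suc_diff_Suc)
  also have "(\<Sum>k\<in>{Suc j..<n}. g k * h (k - Suc j)) = 0"
    using less.IH less.prems by (intro sum.neutral) (auto simp: j_def)
  finally show ?case using monic by simp
qed

lemma scalar_prod_self_eq_0_iff:
  fixes v :: "real vec"
  assumes "v \<in> carrier_vec n"
  shows "v \<bullet> v = 0 \<longleftrightarrow> v = 0\<^sub>v n"
  using conjugate_square_eq_0_vec[OF assms] by simp

lemma scalar_prod_mult_mat_vec:
  fixes M :: "'a :: comm_semiring_0 mat"
  assumes M: "M \<in> carrier_mat r c" and y: "y \<in> carrier_vec r" and w: "w \<in> carrier_vec c"
  shows "y \<bullet> (M *\<^sub>v w) = (\<Sum>l<c. (y \<bullet> col M l) * w $ l)"
proof -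
  have "y \<bullet> (M *\<^sub>v w) = (transpose_mat M *\<^sub>v y) \<bullet> w"
    using transpose_vec_mult_scalar[OF M w y] by simp
  also have "\<dots> = (\<Sum>l<c. (y \<bullet> col M l) * w $ l)"
    using M y w by (auto simp: scalar_prod_def atLeast0LessThan ac_simps intro!: sum.cong)
  finally show ?thesis .
qed

lemma pow_mat_add:
  assumes "A \<in> carrier_mat n n"
  shows "A ^\<^sub>m (k + s) = A ^\<^sub>m k * A ^\<^sub>m s"
  by (induction s) (use assms in \<open>auto simp flip: assoc_mult_mat[of _ n n _ n _ n]\<close>)

lemma pow_mat_add_mult_vec:
  assumes "A \<in> carrier_mat n n" and "v \<in> carrier_vec n"
  shows "A ^\<^sub>m (j + s) *\<^sub>v v = A ^\<^sub>m j *\<^sub>v (A ^\<^sub>m s *\<^sub>v v)"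
  using pow_mat_add[OF assms(1)] assoc_mult_mat_vec[OF pow_carrier_mat pow_carrier_mat assms(2)] assms(1)
  by simp

lemma wide_mat_has_nonzero_kernel_vec:
  fixes P :: "'a :: field mat"
  assumes P: "P \<in> carrier_mat r c" and rc: "r < c"
  obtains v where "v \<in> carrier_vec c" "v \<noteq> 0\<^sub>v c" "P *\<^sub>v v = 0\<^sub>v r"
proof -
  define Q where "Q = mat c c (\<lambda>(i,j). if i < r then P $$ (i,j) else 0)"
  have Q: "Q \<in> carrier_mat c c" unfolding Q_def by auto
  have "Q = mat\<^sub>r c c (\<lambda>i. if i = c - 1 then 0\<^sub>v c else row Q i)"
    using rc by (intro eq_matI) (auto simp: Q_def)
  also have "det \<dots> = 0" by (rule det_row_0) (use rc in \<open>auto simp: Q_def\<close>)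
  finally obtain v where v: "v \<in> carrier_vec c" "v \<noteq> 0\<^sub>v c" "Q *\<^sub>v v = 0\<^sub>v c"
    using det_0_iff_vec_prod_zero_field[OF Q] by auto
  have "P *\<^sub>v v = 0\<^sub>v r"
  proof (rule eq_vecI)
    fix i assume "i < dim_vec (0\<^sub>v r)"
    then have "(P *\<^sub>v v) $ i = (Q *\<^sub>v v) $ i"
      using rc P v(1) by (auto simp: Q_def mult_mat_vec_def scalar_prod_def intro!: sum.cong)
    then show "(P *\<^sub>v v) $ i = 0\<^sub>v r $ i" using v(3) \<open>i < dim_vec (0\<^sub>v r)\<close> rc by simp
  qed (use P in simp)
  with v that show thesis by blast
qed

lemma (in vec_space) rank_eq_dim_iff_span_cols:
  assumes M: "M \<in> carrier_mat n c"
  shows "rank M = n \<longleftrightarrow> span (set (cols M)) = carrier_vec n"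
proof
  assume rk: "rank M = n"
  obtain S where S: "maximal S (\<lambda>T. T \<subseteq> set (cols M) \<and> lin_indpt T)"
    using maximal_exists[of "(\<lambda>T. T \<subseteq> set (cols M) \<and> lin_indpt T)" "card (set (cols M))" "{}"]
    by (meson List.finite_set card_mono empty_iff empty_subsetI finite_lin_indpt2 rev_finite_subset)
  have SM: "S \<subseteq> set (cols M)" and li: "lin_indpt S" using S unfolding maximal_def by auto
  have colsC: "set (cols M) \<subseteq> carrier_vec n" using M cols_dim by blast
  have "card S = n" using rank_card_indpt[OF M S] rk by simp
  then have "basis S"
    using dim_li_is_basis[of S] SM colsC li dim_is_n finite_subset[OF SM] by auto
  then have "carrier_vec n \<subseteq> span (set (cols M))"
    using span_is_monotone[OF SM] unfolding basis_def by auto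
  then show "span (set (cols M)) = carrier_vec n"
    using span_closed[of "set (cols M)"] colsC by auto
next
  assume "span (set (cols M)) = carrier_vec n"
  then have "span_vs (set (cols M)) = V" by (simp add: module_vec_def)
  then show "rank M = n" unfolding rank_def using dim_is_n by simp
qed

lemma trivial_left_kernel_imp_right_inverse:
  fixes M :: "real mat"
  assumes M: "M \<in> carrier_mat r c"
    and ker: "\<And>y. y \<in> carrier_vec r \<Longrightarrow> (\<And>j. j < c \<Longrightarrow> y \<bullet> col M j = 0) \<Longrightarrow> y = 0\<^sub>v r"
  obtains R where "R \<in> carrier_mat c r" and "M * R = 1\<^sub>m r"
proof -
  define G where "G = M * transpose_mat M"
  have G: "G \<in> carrier_mat r r" using M unfolding G_def by auto
  have "det G \<noteq> 0"
  proof
    assume "det G = 0"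
    then obtain v where v: "v \<in> carrier_vec r" "v \<noteq> 0\<^sub>v r" "G *\<^sub>v v = 0\<^sub>v r"
      using det_0_iff_vec_prod_zero_field[OF G] by auto
    let ?w = "transpose_mat M *\<^sub>v v"
    have w: "?w \<in> carrier_vec c" using M v by auto
    have "?w \<bullet> ?w = v \<bullet> (G *\<^sub>v v)"
      using transpose_vec_mult_scalar[OF M w v(1)] M v by (simp add: G_def)
    then have "?w = 0\<^sub>v c" using scalar_prod_self_eq_0_iff[OF w] v by simp
    have "v \<bullet> col M j = 0" if j: "j < c" for j
    proof -
      have "col M j \<bullet> v = ?w $ j" using M j by simp
      then show ?thesis using \<open>?w = 0\<^sub>v c\<close> j comm_scalar_prod[OF v(1), of "col M j"] M by simp
    qed
    then show False using ker v by blast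
  qed
  then obtain H where H: "H \<in> carrier_mat r r" "G * H = 1\<^sub>m r"
    using det_non_zero_imp_unit[OF G] unfolding Units_def ring_mat_def by auto
  show thesis
  proof
    show "transpose_mat M * H \<in> carrier_mat c r" using M H by auto
    have "M * (transpose_mat M * H) = G * H" unfolding G_def using M H by simp
    then show "M * (transpose_mat M * H) = 1\<^sub>m r" using H(2) by simp
  qed
qed

lemma rank_full_iff_trivial_left_kernel:
  fixes M :: "real mat"
  assumes M: "M \<in> carrier_mat r c"
  shows "vec_space.rank r M = r \<longleftrightarrow>
    (\<forall>y\<in>carrier_vec r. (\<forall>j<c. y \<bullet> col M j = 0) \<longrightarrow> y = 0\<^sub>v r)"
proof -
  interpret V: vec_space "TYPE(real)" r .
  have colsC: "set (cols M) \<subseteq> carrier_vec r" using M cols_dim by blast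
  have "V.span (set (cols M)) = carrier_vec r \<longleftrightarrow>
    (\<forall>y\<in>carrier_vec r. (\<forall>j<c. y \<bullet> col M j = 0) \<longrightarrow> y = 0\<^sub>v r)"
  proof (intro iffI ballI impI)
    fix y :: "real vec"
    assume span: "V.span (set (cols M)) = carrier_vec r"
      and y: "y \<in> carrier_vec r" and orth: "\<forall>j<c. y \<bullet> col M j = 0"
    have "y \<in> V.orthogonal_complement (set (cols M))"
      using orth y M by (auto simp: V.orthogonal_complement_def cols_def)
    then have "y \<in> V.orthogonal_complement (V.span (set (cols M)))"
      using V.in_orthogonal_complement_span[OF colsC] by simp
    then have "y \<bullet> y = 0" using span y by (auto simp: V.orthogonal_complement_def)
    then show "y = 0\<^sub>v r" using scalar_prod_self_eq_0_iff[OF y] by simp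
  next
    assume "\<forall>y\<in>carrier_vec r. (\<forall>j<c. y \<bullet> col M j = 0) \<longrightarrow> y = 0\<^sub>v r"
    then obtain R where R: "R \<in> carrier_mat c r" "M * R = 1\<^sub>m r"
      using trivial_left_kernel_imp_right_inverse[OF M] by blast
    have "e \<in> V.span (set (cols M))" if e: "e \<in> carrier_vec r" for e
    proof -
      have "M *\<^sub>v (R *\<^sub>v e) = e" using M R e by (simp flip: assoc_mult_mat_vec)
      moreover have "R *\<^sub>v e \<in> carrier_vec c" using R e by simp
      ultimately show ?thesis using V.col_space_eq[OF M] M e unfolding V.col_space_def by auto
    qed
    then show "V.span (set (cols M)) = carrier_vec r" using V.span_closed[OF colsC] by auto
  qed
  then show ?thesis using V.rank_eq_dim_iff_span_cols[OF M] by simp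
qed

lemma full_row_rank_iff_trivial_left_kernel:
  assumes "M \<in> carrier_mat r c"
  shows "full_row_rank M \<longleftrightarrow> (\<forall>y\<in>carrier_vec r. (\<forall>j<c. y \<bullet> col M j = 0) \<longrightarrow> y = 0\<^sub>v r)"
  using rank_full_iff_trivial_left_kernel[OF assms] assms
  unfolding full_row_rank_def mrank_def by simp

lemma hankel_carrier: "hankel q k T v \<in> carrier_mat (q * k) (T - k + 1)"
  unfolding hankel_def by simp

lemma col_hankel:
  assumes "t < T - k + 1"
  shows "col (hankel q k T v) t = vec (q * k) (\<lambda>r. v (r div q + t) $ (r mod q))"
  using assms unfolding hankel_def by auto

lemma scalar_prod_powers_dependent:
  fixes A :: "'a :: field mat"
  assumes A: "A \<in> carrier_mat n n" and \<xi>: "\<xi> \<in> carrier_vec n"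
  obtains c where "c \<in> carrier_vec (Suc n)" "c \<noteq> 0\<^sub>v (Suc n)"
    and "\<And>v. v \<in> carrier_vec n \<Longrightarrow> (\<Sum>k\<le>n. c $ k * (\<xi> \<bullet> (A ^\<^sub>m k *\<^sub>v v))) = 0"
proof -
  define P where "P = mat n (Suc n) (\<lambda>(i, k). \<xi> \<bullet> col (A ^\<^sub>m k) i)"
  have P: "P \<in> carrier_mat n (Suc n)" unfolding P_def by simp
  obtain c where c: "c \<in> carrier_vec (Suc n)" "c \<noteq> 0\<^sub>v (Suc n)" "P *\<^sub>v c = 0\<^sub>v n"
    using wide_mat_has_nonzero_kernel_vec[OF P] by auto
  have "(\<Sum>k\<le>n. c $ k * (\<xi> \<bullet> (A ^\<^sub>m k *\<^sub>v v))) = 0" if v: "v \<in> carrier_vec n" for v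
  proof -
    have entries: "\<xi> \<bullet> (A ^\<^sub>m k *\<^sub>v v) = (\<Sum>i<n. P $$ (i, k) * v $ i)" if "k \<le> n" for k
      using that scalar_prod_mult_mat_vec[OF pow_carrier_mat[OF A] \<xi> v] by (simp add: P_def)
    have "(\<Sum>k\<le>n. c $ k * (\<xi> \<bullet> (A ^\<^sub>m k *\<^sub>v v))) = (\<Sum>k<Suc n. \<Sum>i<n. P $$ (i, k) * c $ k * v $ i)"
      unfolding lessThan_Suc_atMost
      by (intro sum.cong refl) (simp add: entries sum_distrib_left algebra_simps)
    also have "\<dots> = (\<Sum>i<n. (\<Sum>k<Suc n. P $$ (i, k) * c $ k) * v $ i)"
      by (subst sum.swap) (simp only: sum_distrib_right)
    also have "\<dots> = (\<Sum>i<n. (P *\<^sub>v c) $ i * v $ i)"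
      using P c(1) by (intro sum.cong refl) (simp add: scalar_prod_def atLeast0LessThan)
    also have "\<dots> = 0" using c(3) by simp
    finally show ?thesis .
  qed
  with c that show thesis by blast
qed

lemma monic_annihilator_of_powers:
  fixes A :: "'a :: field mat"
  assumes A: "A \<in> carrier_mat n n" and \<xi>: "\<xi> \<in> carrier_vec n"
  obtains g where "g n = 1"
    and "\<And>v. v \<in> carrier_vec n \<Longrightarrow> (\<Sum>k\<le>n. g k * (\<xi> \<bullet> (A ^\<^sub>m k *\<^sub>v v))) = 0"
proof -
  obtain c where c: "c \<in> carrier_vec (Suc n)" "c \<noteq> 0\<^sub>v (Suc n)"
    and dep: "\<And>v. v \<in> carrier_vec n \<Longrightarrow> (\<Sum>k\<le>n. c $ k * (\<xi> \<bullet> (A ^\<^sub>m k *\<^sub>v v))) = 0"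
    using scalar_prod_powers_dependent[OF A \<xi>] by blast
  define d where "d = Max {k. k \<le> n \<and> c $ k \<noteq> 0}"
  have fin: "finite {k. k \<le> n \<and> c $ k \<noteq> 0}" by simp
  have "{k. k \<le> n \<and> c $ k \<noteq> 0} \<noteq> {}"
  proof
    assume "{k. k \<le> n \<and> c $ k \<noteq> 0} = {}"
    then have "c = 0\<^sub>v (Suc n)" using c(1) by (intro eq_vecI) (auto simp: less_Suc_eq_le)
    with c(2) show False ..
  qed
  then have "d \<in> {k. k \<le> n \<and> c $ k \<noteq> 0}" unfolding d_def using Max_in[OF fin] by blast
  then have dn: "d \<le> n" and cd: "c $ d \<noteq> 0" by auto
  have above: "c $ k = 0" if "d < k" "k \<le> n" for k
  proof (rule ccontr)
    assume "c $ k \<noteq> 0"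
    then have "k \<le> d" using Max_ge[OF fin, of k] that(2) unfolding d_def by blast
    with that(1) show False by simp
  qed
  \<comment> \<open>shift the relation of degree \<open>d\<close> up to degree \<open>n\<close> and normalise its leading coefficient\<close>
  define g where "g k = (if n - d \<le> k then c $ (k - (n - d)) / c $ d else 0)" for k
  have "(\<Sum>k\<le>n. g k * (\<xi> \<bullet> (A ^\<^sub>m k *\<^sub>v v))) = 0" if v: "v \<in> carrier_vec n" for v
  proof -
    let ?w = "A ^\<^sub>m (n - d) *\<^sub>v v"
    have "(\<Sum>k\<le>n. g k * (\<xi> \<bullet> (A ^\<^sub>m k *\<^sub>v v))) = (\<Sum>k\<in>{0 + (n - d)..d + (n - d)}. g k * (\<xi> \<bullet> (A ^\<^sub>m k *\<^sub>v v)))"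
      using dn by (intro sum.mono_neutral_right) (auto simp: g_def)
    also have "\<dots> = (\<Sum>j\<in>{0..d}. g (j + (n - d)) * (\<xi> \<bullet> (A ^\<^sub>m (j + (n - d)) *\<^sub>v v)))"
      by (rule sum.shift_bounds_cl_nat_ivl)
    also have "\<dots> = (\<Sum>j\<le>d. c $ j * (\<xi> \<bullet> (A ^\<^sub>m j *\<^sub>v ?w))) / c $ d"
      by (simp add: g_def atLeast0AtMost pow_mat_add_mult_vec[OF A v] sum_divide_distrib)
    also have "(\<Sum>j\<le>d. c $ j * (\<xi> \<bullet> (A ^\<^sub>m j *\<^sub>v ?w))) = (\<Sum>j\<le>n. c $ j * (\<xi> \<bullet> (A ^\<^sub>m j *\<^sub>v ?w)))"
      using dn above by (intro sum.mono_neutral_left) auto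
    also have "\<dots> = 0" using dep[OF mult_mat_vec_carrier[OF pow_carrier_mat[OF A] v]] .
    finally show ?thesis by simp
  qed
  moreover have "g n = 1" using dn cd by (simp add: g_def)
  ultimately show thesis using that by blast
qed

definition markov_param :: "real vec \<Rightarrow> real mat \<Rightarrow> real mat \<Rightarrow> nat \<Rightarrow> nat \<Rightarrow> real" where
  "markov_param \<xi> A B i l = \<xi> \<bullet> (A ^\<^sub>m i *\<^sub>v col B l)"

lemma scalar_prod_pow_mat_input:
  assumes A: "A \<in> carrier_mat n n" and B: "B \<in> carrier_mat n m"
    and \<xi>: "\<xi> \<in> carrier_vec n" and w: "w \<in> carrier_vec m"
  shows "\<xi> \<bullet> (A ^\<^sub>m k *\<^sub>v (B *\<^sub>v w)) = (\<Sum>l<m. markov_param \<xi> A B k l * w $ l)"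
proof -
  have "\<xi> \<bullet> (A ^\<^sub>m k *\<^sub>v (B *\<^sub>v w)) = \<xi> \<bullet> ((A ^\<^sub>m k * B) *\<^sub>v w)"
    using assoc_mult_mat_vec[OF pow_carrier_mat[OF A] B w] by simp
  also have "\<dots> = (\<Sum>l<m. (\<xi> \<bullet> col (A ^\<^sub>m k * B) l) * w $ l)"
    using A B \<xi> w by (intro scalar_prod_mult_mat_vec[of _ n m]) auto
  finally show ?thesis
    using col_mult2[OF pow_carrier_mat[OF A] B] unfolding markov_param_def by (auto intro!: sum.cong)
qed

lemma scalar_prod_trajectory_expansion:
  assumes A: "A \<in> carrier_mat n n" and B: "B \<in> carrier_mat n m" and \<xi>: "\<xi> \<in> carrier_vec n"
    and u: "\<And>t. t < T \<Longrightarrow> u t \<in> carrier_vec m"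
    and x: "\<And>t. t \<le> T \<Longrightarrow> x t \<in> carrier_vec n"
    and step: "\<And>t. t < T \<Longrightarrow> x (Suc t) = A *\<^sub>v x t + B *\<^sub>v u t"
  shows "t + k \<le> T \<Longrightarrow> \<xi> \<bullet> x (t + k) = \<xi> \<bullet> (A ^\<^sub>m k *\<^sub>v x t)
    + (\<Sum>j<k. \<Sum>l<m. markov_param \<xi> A B (k - Suc j) l * u (t + j) $ l)"
proof (induction k arbitrary: t)
  case 0
  then show ?case using A x by simp
next
  case (Suc k)
  have xt: "x t \<in> carrier_vec n" and ut: "u t \<in> carrier_vec m" using Suc.prems x u by auto
  have "A ^\<^sub>m k *\<^sub>v x (Suc t) = A ^\<^sub>m k *\<^sub>v (A *\<^sub>v x t) + A ^\<^sub>m k *\<^sub>v (B *\<^sub>v u t)"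
    using step[of t] Suc.prems mult_add_distrib_mat_vec[OF pow_carrier_mat[OF A]] A B xt ut by simp
  then have "\<xi> \<bullet> (A ^\<^sub>m k *\<^sub>v x (Suc t))
      = \<xi> \<bullet> (A ^\<^sub>m k *\<^sub>v (A *\<^sub>v x t)) + \<xi> \<bullet> (A ^\<^sub>m k *\<^sub>v (B *\<^sub>v u t))"
    using scalar_prod_add_distrib[OF \<xi>] A B xt ut
    by (simp add: mult_mat_vec_carrier[OF pow_carrier_mat[OF A]])
  also have "\<xi> \<bullet> (A ^\<^sub>m k *\<^sub>v (A *\<^sub>v x t)) = \<xi> \<bullet> (A ^\<^sub>m Suc k *\<^sub>v x t)"
    using assoc_mult_mat_vec[OF pow_carrier_mat[OF A] A xt] by simp
  finally show ?case
    using Suc.IH[of "Suc t"] Suc.prems scalar_prod_pow_mat_input[OF A B \<xi> ut, of k]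
    by (simp add: sum.lessThan_Suc_shift del: sum.lessThan_Suc)
qed

lemma orthogonal_trajectory_input_relation:
  assumes A: "A \<in> carrier_mat n n" and B: "B \<in> carrier_mat n m" and \<xi>: "\<xi> \<in> carrier_vec n"
    and u: "\<And>t. t < T \<Longrightarrow> u t \<in> carrier_vec m"
    and x: "\<And>t. t \<le> T \<Longrightarrow> x t \<in> carrier_vec n"
    and step: "\<And>t. t < T \<Longrightarrow> x (Suc t) = A *\<^sub>v x t + B *\<^sub>v u t"
    and orth: "\<And>t. t \<le> T \<Longrightarrow> \<xi> \<bullet> x t = 0"
    and ann: "\<And>v. v \<in> carrier_vec n \<Longrightarrow> (\<Sum>k\<le>n. g k * (\<xi> \<bullet> (A ^\<^sub>m k *\<^sub>v v))) = 0"
    and t: "t + n \<le> T"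
  shows "(\<Sum>j<n. \<Sum>l<m. (\<Sum>k\<in>{Suc j..n}. g k * markov_param \<xi> A B (k - Suc j) l) * u (t + j) $ l) = 0"
proof -
  let ?M = "\<lambda>k j l. g k * markov_param \<xi> A B (k - Suc j) l * u (t + j) $ l"
  have expand: "g k * (\<xi> \<bullet> x (t + k)) = g k * (\<xi> \<bullet> (A ^\<^sub>m k *\<^sub>v x t)) + (\<Sum>j<k. \<Sum>l<m. ?M k j l)"
    if "k \<le> n" for k
    using scalar_prod_trajectory_expansion[where u = u and x = x and t = t and k = k, OF A B \<xi> u x step] that t
    by (simp add: distrib_left sum_distrib_left mult.assoc)
  have "0 = (\<Sum>k\<le>n. g k * (\<xi> \<bullet> x (t + k)))" using orth t by simp
  also have "\<dots> = (\<Sum>k\<le>n. g k * (\<xi> \<bullet> (A ^\<^sub>m k *\<^sub>v x t))) + (\<Sum>k\<le>n. \<Sum>j<k. \<Sum>l<m. ?M k j l)"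
    using expand by (simp add: sum.distrib)
  also have "(\<Sum>k\<le>n. g k * (\<xi> \<bullet> (A ^\<^sub>m k *\<^sub>v x t))) = 0" using ann x t by simp
  also have "(\<Sum>k\<le>n. \<Sum>j<k. \<Sum>l<m. ?M k j l) = (\<Sum>j<n. \<Sum>k\<in>{Suc j..n}. \<Sum>l<m. ?M k j l)"
    by (rule sum.nested_swap')
  also have "\<dots> = (\<Sum>j<n. \<Sum>l<m. (\<Sum>k\<in>{Suc j..n}. g k * markov_param \<xi> A B (k - Suc j) l) * u (t + j) $ l)"
    by (rule sum.cong[OF refl], subst sum.swap) (simp only: sum_distrib_right)
  finally show ?thesis by simp
qed

lemma persistently_exciting_coeffs_eq_0:
  assumes pe: "persistently_exciting m T u n"
    and rel: "\<And>t. t + n \<le> T \<Longrightarrow> (\<Sum>j<n. \<Sum>l<m. Y j l * u (t + j) $ l) = 0"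
    and j: "j < n" and l: "l < m"
  shows "Y j l = 0"
proof -
  let ?H = "hankel m n T u"
  define y where "y = vec (m * n) (\<lambda>r. Y (r div m) (r mod m))"
  have nT: "n \<le> T" and H: "full_row_rank ?H" using pe unfolding persistently_exciting_def by auto
  have orth: "\<forall>t < T - n + 1. y \<bullet> col ?H t = 0"
  proof (intro allI impI)
    fix t assume t: "t < T - n + 1"
    have "y \<bullet> col ?H t = (\<Sum>r<m * n. Y (r div m) (r mod m) * u (t + r div m) $ (r mod m))"
      unfolding col_hankel[OF t] y_def scalar_prod_def by (simp add: atLeast0LessThan add.commute)
    also have "\<dots> = (\<Sum>j<n. \<Sum>l<m. Y j l * u (t + j) $ l)"
      by (rule sum_lessThan_mult_div_mod)
    also have "\<dots> = 0" using rel t nT by simp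
    finally show "y \<bullet> col ?H t = 0" .
  qed
  have "y \<in> carrier_vec (m * n)" by (simp add: y_def)
  with H orth have y0: "y = 0\<^sub>v (m * n)"
    unfolding full_row_rank_iff_trivial_left_kernel[OF hankel_carrier] by blast
  have jl: "j * m + l < m * n"
  proof -
    have "j * m + l < Suc j * m" using l by simp
    also have "\<dots> \<le> n * m" using j by (intro mult_le_mono1) simp
    finally show ?thesis by (simp add: mult.commute)
  qed
  have "Y j l = y $ (j * m + l)" using jl l by (simp add: y_def)
  then show ?thesis using y0 jl by simp
qed

lemma controllable_markov_params_vanish_imp_zero:
  assumes A: "A \<in> carrier_mat n n" and B: "B \<in> carrier_mat n m"
    and ctrb: "controllable A B" and \<xi>: "\<xi> \<in> carrier_vec n"
    and markov: "\<And>i l. i < n \<Longrightarrow> l < m \<Longrightarrow> markov_param \<xi> A B i l = 0"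
  shows "\<xi> = 0\<^sub>v n"
proof -
  have C: "ctrb_matrix A B \<in> carrier_mat n (n * m)" unfolding ctrb_matrix_def using A B by auto
  have "\<xi> \<bullet> col (ctrb_matrix A B) j = 0" if j: "j < n * m" for j
  proof -
    have "0 < m" using j by (cases m) auto
    then have m: "j mod m < m" "j div m < n" using j by (auto simp: less_mult_imp_div_less mult.commute)
    have "col (ctrb_matrix A B) j = col (A ^\<^sub>m (j div m) * B) (j mod m)"
      unfolding ctrb_matrix_def using A B j m by (intro eq_vecI) auto
    also have "\<dots> = A ^\<^sub>m (j div m) *\<^sub>v col B (j mod m)"
      using col_mult2[OF pow_carrier_mat[OF A] B m(1)] .
    finally show ?thesis using markov[OF m(2) m(1)] unfolding markov_param_def by simp
  qed
  then show ?thesis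
    using ctrb rank_full_iff_trivial_left_kernel[OF C] \<xi> A carrier_matD[OF C]
    unfolding controllable_def mrank_def by simp
qed

theorem proposition2:
  fixes n m T :: nat and A B :: "real mat" and u x :: "nat \<Rightarrow> real vec"
  assumes "A \<in> carrier_mat n n" and "B \<in> carrier_mat n m"
    and "\<forall>t\<le>T. u t \<in> carrier_vec m"
    and "controllable A B"
    and "persistently_exciting m T u n"
    and "\<forall>t\<le>T. x t \<in> carrier_vec n"
    and "\<forall>t<T. x (Suc t) = A *\<^sub>v x t + B *\<^sub>v u t"
  shows "full_row_rank (hankel n 1 (Suc T) x)"
proof -
  note A = assms(1) and B = assms(2)
  have u: "\<And>t. t < T \<Longrightarrow> u t \<in> carrier_vec m" and x: "\<And>t. t \<le> T \<Longrightarrow> x t \<in> carrier_vec n"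
    and step: "\<And>t. t < T \<Longrightarrow> x (Suc t) = A *\<^sub>v x t + B *\<^sub>v u t"
    using assms(3,6,7) by auto
  have "\<xi> = 0\<^sub>v n" if \<xi>: "\<xi> \<in> carrier_vec n" and orth: "\<And>t. t \<le> T \<Longrightarrow> \<xi> \<bullet> x t = 0" for \<xi>
  proof -
    obtain g where monic: "g n = 1"
      and ann: "\<And>v. v \<in> carrier_vec n \<Longrightarrow> (\<Sum>k\<le>n. g k * (\<xi> \<bullet> (A ^\<^sub>m k *\<^sub>v v))) = 0"
      using monic_annihilator_of_powers[OF A \<xi>] by blast
    have "(\<Sum>k\<in>{Suc j..n}. g k * markov_param \<xi> A B (k - Suc j) l) = 0" if "j < n" "l < m" for j l
      using persistently_exciting_coeffs_eq_0[OF assms(5)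
          orthogonal_trajectory_input_relation[where u = u and x = x, OF A B \<xi> u x step orth ann] that] .
    then have "markov_param \<xi> A B i l = 0" if "i < n" "l < m" for i l
      using triangular_convolution_eq_0[of g n "\<lambda>i. markov_param \<xi> A B i l"] monic that by blast
    then show ?thesis using controllable_markov_params_vanish_imp_zero[OF A B assms(4) \<xi>] by blast
  qed
  moreover have "col (hankel n 1 (Suc T) x) t = x t" if "t \<le> T" for t
    using col_hankel[of t "Suc T" 1 n x] x[OF that] that by (intro eq_vecI) auto
  ultimately show ?thesis
    using full_row_rank_iff_trivial_left_kernel[OF hankel_carrier, of n 1 "Suc T" x] by simp
qed

end
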